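(* Let $r_1=1/4$, $r_n=\frac1{2n}$ for $n\ge2$, and $p_n=\frac12+r_n$, $q_n=1-p_n$, $\rho_n=q_n/p_n$ for $n\ge1$. Then for every $\varepsilon>0$ there exists $i_0>0$ such that $$(1-\varepsilon)\frac{i(j-i)}{j}\le D(i,j)\le(1+\varepsilon)\frac{i(j-i)}{j}\quad\text{for all }j>i\ge i_0,$$ $$(1-\varepsilon)i\le D(i)\le(1+\varepsilon)i\quad\text{for all }i\ge i_0.$$
   Context: For integers $n\ge m\ge0$ let $D(m,n)=0$ if $n=m$, $D(m,n)=1$ if $n=m+1$, and $D(m,n)=1+\sum_{j=1}^{n-m-1}\rho_{m+1}\cdots\rho_{m+j}$ if $n\ge m+2$; let $D(m)=\lim_{n\to\infty}D(m,n)$. *)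

theory Defs
  imports Complex_Main
begin

definition r :: "nat \<Rightarrow> real" where
  "r n = (if n = 1 then 1/4 else 1 / (2 * real n))"

definition p :: "nat \<Rightarrow> real" where
  "p n = 1/2 + r n"

definition q :: "nat \<Rightarrow> real" where
  "q n = 1 - p n"

definition rho :: "nat \<Rightarrow> real" where
  "rho n = q n / p n"

text \<open>D(m,n) for n \<ge> m: 0 if n = m, 1 if n = m+1, and
  1 + sum_{j=1}^{n-m-1} rho_{m+1} ... rho_{m+j} if n \<ge> m+2
  (the last formula also gives 1 when n = m+1).\<close>
definition D :: "nat \<Rightarrow> nat \<Rightarrow> real" where
  "D m n = (if n = m then 0
            else 1 + (\<Sum>j=1..n-m-1. \<Prod>k=1..j. rho (m + k)))"

definition Dlim :: "nat \<Rightarrow> real" where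
  "Dlim m = lim (\<lambda>n. D m n)"

end

theory Submission
  imports Defs
begin

text \<open>For \<open>n \<ge> 2\<close> we have \<open>\<rho>\<^sub>n = (n-1)/(n+1)\<close>, so the products
  \<open>\<rho>\<^sub>m\<^sub>+\<^sub>1\<cdots>\<rho>\<^sub>m\<^sub>+\<^sub>j\<close> telescope to \<open>m(m+1)/((m+j)(m+j+1))\<close> and the partial sums
  to the exact closed form \<open>D(m,n) = (m+1)(n-m)/n\<close>. Hence \<open>D(i,j)\<close> is
  \<open>(1 + 1/i)\<close> times \<open>i(j-i)/j\<close> and \<open>D(i) = i + 1\<close>, and both estimates hold
  as soon as \<open>i \<ge> 1/\<epsilon>\<close>. The exceptional value \<open>r\<^sub>1\<close> never enters, since
  only \<open>\<rho>\<^sub>k\<close> with \<open>k \<ge> 2\<close> occur.\<close>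

lemma rho_eq:
  assumes "n \<ge> 2"
  shows "rho n = (real n - 1) / (real n + 1)"
proof -
  have "p n = (real n + 1) / (2 * real n)" "q n = (real n - 1) / (2 * real n)"
    using assms by (auto simp: p_def q_def r_def field_simps)
  then show ?thesis using assms by (simp add: rho_def)
qed

lemma prod_rho_eq:
  assumes "m \<ge> 1"
  shows "(\<Prod>k=1..j. rho (m + k)) =
           real m * (real m + 1) / ((real m + real j) * (real m + real j + 1))"
proof (induction j)
  case 0
  then show ?case using assms by simp
next
  case (Suc j)
  have "(\<Prod>k=1..Suc j. rho (m + k)) = (\<Prod>k=1..j. rho (m + k)) * rho (m + Suc j)"
    by simp
  also have "rho (m + Suc j) = (real m + real j) / (real m + real j + 2)"
    using assms by (subst rho_eq) (auto simp: field_simps)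
  finally show ?case
    using assms unfolding Suc by (simp add: divide_simps) (simp add: algebra_simps)
qed

lemma sum_prod_rho_eq:
  assumes "m \<ge> 1"
  shows "1 + (\<Sum>j=1..t. \<Prod>k=1..j. rho (m + k)) =
           (real m + 1) * (real t + 1) / (real m + real t + 1)"
proof (induction t)
  case 0
  then show ?case by simp
next
  case (Suc t)
  have "1 + (\<Sum>j=1..Suc t. \<Prod>k=1..j. rho (m + k)) =
          (real m + 1) * (real t + 1) / (real m + real t + 1)
          + real m * (real m + 1) / ((real m + real t + 1) * (real m + real t + 2))"
    using Suc prod_rho_eq[OF assms, of "Suc t"] by (simp add: add_ac)
  also have "\<dots> = (real m + 1) * (real (Suc t) + 1) / (real m + real (Suc t) + 1)"
    by (simp add: divide_simps) (simp add: algebra_simps)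
  finally show ?case .
qed

lemma D_eq:
  assumes "m \<ge> 1" "m < n"
  shows "D m n = (real m + 1) * (real (n - m) / real n)"
proof -
  have "D m n = 1 + (\<Sum>j=1..n-m-1. \<Prod>k=1..j. rho (m + k))"
    using assms by (simp add: D_def)
  also have "\<dots> = (real m + 1) * (real (n - m - 1) + 1) / (real m + real (n - m - 1) + 1)"
    by (rule sum_prod_rho_eq[OF assms(1)])
  finally show ?thesis using assms by (simp add: of_nat_diff)
qed

lemma D_tendsto:
  assumes "m \<ge> 1"
  shows "(\<lambda>n. D m n) \<longlonglongrightarrow> real m + 1"
proof -
  have "\<forall>\<^sub>F n in sequentially. (real m + 1) * (1 - real m / real n) = D m n"
    using eventually_gt_at_top[of m]
    by eventually_elim (simp add: D_eq[OF assms] field_simps of_nat_diff)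
  moreover have "(\<lambda>n. (real m + 1) * (1 - real m / real n)) \<longlonglongrightarrow> (real m + 1) * (1 - 0)"
    by (intro tendsto_intros lim_const_over_n)
  ultimately show ?thesis by (simp add: tendsto_cong)
qed

lemma Dlim_eq:
  assumes "m \<ge> 1"
  shows "Dlim m = real m + 1"
  unfolding Dlim_def using D_tendsto[OF assms] by (rule limI)

lemma succ_mult_bounds:
  fixes \<epsilon> x :: real
  assumes "1 \<le> \<epsilon> * real i" "\<epsilon> > 0" "x \<ge> 0"
  shows "(1 - \<epsilon>) * (real i * x) \<le> (real i + 1) * x"
    and "(real i + 1) * x \<le> (1 + \<epsilon>) * (real i * x)"
proof -
  have "(1 - \<epsilon>) * real i \<le> real i + 1" "real i + 1 \<le> (1 + \<epsilon>) * real i"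
    using assms by (auto simp: algebra_simps)
  from this[THEN mult_right_mono, OF assms(3)]
  show "(1 - \<epsilon>) * (real i * x) \<le> (real i + 1) * x"
    and "(real i + 1) * x \<le> (1 + \<epsilon>) * (real i * x)"
    by (simp_all add: mult.assoc)
qed

theorem lemma11:
  fixes \<epsilon> :: real
  assumes "\<epsilon> > 0"
  shows "\<exists>i0::nat. i0 > 0 \<and>
     (\<forall>i j. i0 \<le> i \<and> i < j \<longrightarrow>
        (1 - \<epsilon>) * (real i * real (j - i) / real j) \<le> D i j \<and>
        D i j \<le> (1 + \<epsilon>) * (real i * real (j - i) / real j)) \<and>
     (\<forall>i. i0 \<le> i \<longrightarrow>
        convergent (\<lambda>n. D i n) \<and>
        (1 - \<epsilon>) * real i \<le> Dlim i \<and> Dlim i \<le> (1 + \<epsilon>) * real i)"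
proof (intro exI conjI allI impI)
  define i0 where "i0 = nat \<lceil>1 / \<epsilon>\<rceil> + 1"
  show "i0 > 0" by (simp add: i0_def)
  have large: "1 \<le> \<epsilon> * real i" "i \<ge> 1" if "i0 \<le> i" for i
  proof -
    have "1 / \<epsilon> \<le> real i" using that unfolding i0_def by linarith
    then show "1 \<le> \<epsilon> * real i" using assms by (simp add: field_simps)
    show "i \<ge> 1" using that unfolding i0_def by simp
  qed
  {
    fix i j assume ij: "i0 \<le> i \<and> i < j"
    then have "i \<ge> 1" using large(2) by blast
    then show "(1 - \<epsilon>) * (real i * real (j - i) / real j) \<le> D i j"
      and "D i j \<le> (1 + \<epsilon>) * (real i * real (j - i) / real j)"
      using ij succ_mult_bounds[OF large(1) assms, of i "real (j - i) / real j"]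
      by (simp_all add: D_eq)
  next
    fix i assume i: "i0 \<le> i"
    then have "i \<ge> 1" using large(2) by blast
    then show "convergent (\<lambda>n. D i n)"
      using D_tendsto by (auto simp: convergent_def)
    show "(1 - \<epsilon>) * real i \<le> Dlim i" "Dlim i \<le> (1 + \<epsilon>) * real i"
      using i \<open>i \<ge> 1\<close> succ_mult_bounds[OF large(1) assms, of i 1] by (simp_all add: Dlim_eq)
  }
qed

end
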